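(* Let $N, R \in \mathbb{N}$ and let $g_1,\dots,g_R : [N]\to[N]$ be arbitrary bijections (the single-hop factual recall problem with shared attributes). Then there is a $1$-layer transformer whose MLP has $3$ layers and width $R$, with (learned) embedding dimension $d = 4R\log(N)+1$, that correctly solves the single-hop factual recall problem, i.e. on every input $(s, r)\in[N]\times[R]$ it correctly predicts $y = g_r(s)$. The same can also be achieved without an MLP, by a $1$-layer transformer using multi-head attention with $R$ attention heads of head dimension $d_h = 4\log(N)$ and embedding dimension $d = 4R\log(N) + 4\log(R) + 1$.
   Context: Write $[N]=\{1,\dots,N\}$. Subjects are $[N]$, relations are $[R]$, and each relation $r$ has a bijection $g_r:[N]\to[N]$; attributes live in the same set $[N]$ as subjects (shared codomain). The model is an autoregressive transformer over the vocabulary $[N]\cup[R]$; it receives the sequence $(s, r)$ and must predict the next token $y=g_r(s)$. The token embeddings are free (learnable) vectors in $\mathbb{R}^d$. A transformer layer acts on $X\in\mathbb{R}^{d\times n}$ (columns = token embeddings): each head $h$ computes $A^{(h)}=\mathrm{softmax}((W_K^{(h)}X)^\top(W_Q^{(h)}X))$ (causal), the attention output is $Z=\sum_h W_V^{(h)}X(A^{(h)})^\top$, then $\tilde X = Z + X$, and finally $X' = \tilde X + \mathrm{MLP}(\tilde X)$, where the MLP acts on each column independently and is a ReLU network of the stated number of layers and hidden width. No normalization layers are used. *)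

theory Defs
  imports Complex_Main
begin

(* Vectors in R^n are functions nat => real; only indices < n are meaningful.
   An m x n matrix is a function nat => nat => real (row, column). *)

definition inner_d :: "nat \<Rightarrow> (nat \<Rightarrow> real) \<Rightarrow> (nat \<Rightarrow> real) \<Rightarrow> real" where
  "inner_d n x y = (\<Sum>i<n. x i * y i)"

definition matvec :: "nat \<Rightarrow> nat \<Rightarrow> (nat \<Rightarrow> nat \<Rightarrow> real) \<Rightarrow> (nat \<Rightarrow> real) \<Rightarrow> (nat \<Rightarrow> real)" where
  "matvec m n M x = (\<lambda>i. if i < m then (\<Sum>j<n. M i j * x j) else 0)"

definition vadd :: "(nat \<Rightarrow> real) \<Rightarrow> (nat \<Rightarrow> real) \<Rightarrow> (nat \<Rightarrow> real)" where
  "vadd x y = (\<lambda>i. x i + y i)"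

definition relu_vec :: "nat \<Rightarrow> (nat \<Rightarrow> real) \<Rightarrow> (nat \<Rightarrow> real)" where
  "relu_vec n x = (\<lambda>i. if i < n then max 0 (x i) else 0)"

(* Vocabulary [N] \<union> [R]: Inl s for subjects/attributes s \<in> [N], Inr r for relations r \<in> [R]. *)
definition vocab :: "nat \<Rightarrow> nat \<Rightarrow> (nat + nat) set" where
  "vocab N R = Inl ` {1..N} \<union> Inr ` {1..R}"

(* One causal softmax attention head of head dimension dh in model dimension d,
   evaluated at the last position of the length-2 input (x1, x2).
   Key/query matrices WK, WQ are dh x d; the value map is W_V = W_O V with
   V : dh x d and W_O : d x dh. *)
definition attn_head_last ::
  "nat \<Rightarrow> nat \<Rightarrow> (nat \<Rightarrow> nat \<Rightarrow> real) \<Rightarrow> (nat \<Rightarrow> nat \<Rightarrow> real) \<Rightarrow>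
   (nat \<Rightarrow> nat \<Rightarrow> real) \<Rightarrow> (nat \<Rightarrow> nat \<Rightarrow> real) \<Rightarrow>
   (nat \<Rightarrow> real) \<Rightarrow> (nat \<Rightarrow> real) \<Rightarrow> (nat \<Rightarrow> real)" where
  "attn_head_last d dh WK WQ WO V x1 x2 =
     (let q  = matvec dh d WQ x2;
          s1 = inner_d dh (matvec dh d WK x1) q;
          s2 = inner_d dh (matvec dh d WK x2) q;
          a1 = exp s1 / (exp s1 + exp s2);
          a2 = exp s2 / (exp s1 + exp s2);
          v1 = matvec d dh WO (matvec dh d V x1);
          v2 = matvec d dh WO (matvec dh d V x2)
      in (\<lambda>i. a1 * v1 i + a2 * v2 i))"

definition mlp3 ::
  "nat \<Rightarrow> nat \<Rightarrow> (nat \<Rightarrow> nat \<Rightarrow> real) \<Rightarrow> (nat \<Rightarrow> real) \<Rightarrow>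
   (nat \<Rightarrow> nat \<Rightarrow> real) \<Rightarrow> (nat \<Rightarrow> real) \<Rightarrow>
   (nat \<Rightarrow> nat \<Rightarrow> real) \<Rightarrow> (nat \<Rightarrow> real) \<Rightarrow> (nat \<Rightarrow> real) \<Rightarrow> (nat \<Rightarrow> real)" where
  "mlp3 d w W1 b1 W2 b2 W3 b3 x =
     vadd (matvec d w W3 (relu_vec w (vadd (matvec w w W2 (relu_vec w (vadd (matvec w d W1 x) b1))) b2))) b3"

definition tf_mlp_out ::
  "nat \<Rightarrow> nat \<Rightarrow> (nat + nat \<Rightarrow> nat \<Rightarrow> real) \<Rightarrow>
   (nat \<Rightarrow> nat \<Rightarrow> real) \<Rightarrow> (nat \<Rightarrow> nat \<Rightarrow> real) \<Rightarrow> (nat \<Rightarrow> nat \<Rightarrow> real) \<Rightarrow> (nat \<Rightarrow> nat \<Rightarrow> real) \<Rightarrow>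
   (nat \<Rightarrow> nat \<Rightarrow> real) \<Rightarrow> (nat \<Rightarrow> real) \<Rightarrow>
   (nat \<Rightarrow> nat \<Rightarrow> real) \<Rightarrow> (nat \<Rightarrow> real) \<Rightarrow>
   (nat \<Rightarrow> nat \<Rightarrow> real) \<Rightarrow> (nat \<Rightarrow> real) \<Rightarrow>
   nat + nat \<Rightarrow> nat + nat \<Rightarrow> (nat \<Rightarrow> real)" where
  "tf_mlp_out d w E WK WQ WO V W1 b1 W2 b2 W3 b3 t1 t2 =
     (let xt = vadd (attn_head_last d d WK WQ WO V (E t1) (E t2)) (E t2)
      in vadd xt (mlp3 d w W1 b1 W2 b2 W3 b3 xt))"

definition tf_mha_out ::
  "nat \<Rightarrow> nat \<Rightarrow> nat \<Rightarrow> (nat + nat \<Rightarrow> nat \<Rightarrow> real) \<Rightarrow>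
   (nat \<Rightarrow> nat \<Rightarrow> nat \<Rightarrow> real) \<Rightarrow> (nat \<Rightarrow> nat \<Rightarrow> nat \<Rightarrow> real) \<Rightarrow>
   (nat \<Rightarrow> nat \<Rightarrow> nat \<Rightarrow> real) \<Rightarrow> (nat \<Rightarrow> nat \<Rightarrow> nat \<Rightarrow> real) \<Rightarrow>
   nat + nat \<Rightarrow> nat + nat \<Rightarrow> (nat \<Rightarrow> real)" where
  "tf_mha_out d dh H E WK WQ WO V t1 t2 =
     vadd (\<lambda>i. \<Sum>h\<in>{1..H}. attn_head_last d dh (WK h) (WQ h) (WO h) (V h) (E t1) (E t2) i) (E t2)"

(* Next-token prediction: logits <E v, out> over the whole vocabulary (tied
   embeddings); the prediction is y iff y is the unique argmax. *)
definition predicts :: "nat \<Rightarrow> (nat + nat) set \<Rightarrow> (nat + nat \<Rightarrow> nat \<Rightarrow> real) \<Rightarrow>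
   (nat \<Rightarrow> real) \<Rightarrow> nat + nat \<Rightarrow> bool" where
  "predicts d V E out y \<longleftrightarrow>
     (\<forall>v\<in>V. v \<noteq> y \<longrightarrow> inner_d d (E v) out < inner_d d (E y) out)"

end

theory Submission
  imports Defs "HOL-Analysis.Harmonic_Numbers"
begin

(*
  Both transformers use one embedding: subject x is (x, -8 x^2, g_1 x, ..., g_R x) in coordinates
  0, ..., R + 1, and relation r is e_1 + e_(R+1+r). Since 4 ln N > 2, both dimensions in the
  statement are at least 2 R + 2, which is all this layout needs. If the output column has 16 M in
  coordinate 0 and 1 in coordinate 1, subject y gets logit 8 (2 M y - y^2); among integers this is
  maximised exactly at the integer within 1/4 of M, while every relation logit stays below 4. So it
  suffices to bring g_r s into coordinate 0 up to an error of 1/4.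

  With an MLP, uniform attention copies g_h s / N next to the one-hot code of r, and a ReLU with
  bias -N keeps only the entry of h = r. Without an MLP, the query of r separates the two attention
  scores of head h by lambda = 4 R N in favour of the subject if h = r and of the relation
  otherwise; head h carries 16 g_h s, and the softmax leakage is at most R N exp (- lambda) < 1/4.
*)

definition select_rows :: "(nat \<Rightarrow> nat set) \<Rightarrow> (nat \<Rightarrow> real) \<Rightarrow> nat \<Rightarrow> nat \<Rightarrow> real" where
  "select_rows S c = (\<lambda>i j. if j \<in> S i then c i else 0)"

lemma matvec_select_rows:
  assumes "\<forall>i<m. S i \<subseteq> {..<n}"
  shows "matvec m n (select_rows S c) x = (\<lambda>i. if i < m then c i * (\<Sum>j\<in>S i. x j) else 0)"
proof
  fix i
  show "matvec m n (select_rows S c) x i = (if i < m then c i * (\<Sum>j\<in>S i. x j) else 0)"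
  proof (cases "i < m")
    case True
    then have "(\<Sum>j<n. select_rows S c i j * x j) = (\<Sum>j\<in>S i. c i * x j)"
      using assms by (intro sum.mono_neutral_cong_right) (auto simp: select_rows_def)
    with True show ?thesis
      by (simp add: matvec_def sum_distrib_left)
  qed (simp add: matvec_def)
qed

definition identity_matrix :: "nat \<Rightarrow> nat \<Rightarrow> real" where
  "identity_matrix = select_rows (\<lambda>i. {i}) (\<lambda>_. 1)"

lemma matvec_identity_matrix: "matvec n n identity_matrix x = (\<lambda>i. if i < n then x i else 0)"
  unfolding identity_matrix_def by (subst matvec_select_rows) auto

lemma inner_d_two:
  assumes "2 \<le> n" and "\<And>i. 2 \<le> i \<Longrightarrow> x i = 0"
  shows "inner_d n x y = x 0 * y 0 + x 1 * y 1"
proof -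
  have "inner_d n x y = (\<Sum>i\<in>{0, 1}. x i * y i)"
    unfolding inner_d_def using assms by (intro sum.mono_neutral_right) auto
  then show ?thesis
    by simp
qed

definition softmax2 :: "real \<Rightarrow> real \<Rightarrow> real" where
  "softmax2 a b = exp a / (exp a + exp b)"

lemma softmax2_nonneg: "0 \<le> softmax2 a b"
  by (simp add: softmax2_def add_pos_pos less_imp_le)

lemma softmax2_le_one: "softmax2 a b \<le> 1"
  by (simp add: softmax2_def add_pos_pos)

lemma softmax2_le:
  assumes "lam \<le> b - a"
  shows "softmax2 a b \<le> exp (- lam)"
proof -
  have "softmax2 a b \<le> exp a / exp b"
    unfolding softmax2_def by (intro divide_left_mono mult_pos_pos add_pos_pos) auto
  also have "\<dots> \<le> exp (- lam)"
    using assms by (simp flip: exp_diff)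
  finally show ?thesis .
qed

lemma softmax2_ge:
  assumes "lam \<le> a - b"
  shows "1 - exp (- lam) \<le> softmax2 a b"
proof -
  have "exp a + exp b > 0"
    by (intro add_pos_pos) auto
  then have "softmax2 a b = 1 - softmax2 b a"
    by (simp add: softmax2_def add.commute field_simps)
  then show ?thesis
    using softmax2_le[OF assms] by simp
qed

definition attn_weight ::
  "nat \<Rightarrow> nat \<Rightarrow> (nat \<Rightarrow> nat \<Rightarrow> real) \<Rightarrow> (nat \<Rightarrow> nat \<Rightarrow> real) \<Rightarrow>
   (nat \<Rightarrow> real) \<Rightarrow> (nat \<Rightarrow> real) \<Rightarrow> real" where
  "attn_weight d dh WK WQ x1 x2 =
     (let q = matvec dh d WQ x2
      in softmax2 (inner_d dh (matvec dh d WK x1) q) (inner_d dh (matvec dh d WK x2) q))"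

lemma attn_head_last_zero_value:
  assumes "matvec d dh WO (matvec dh d V x2) = (\<lambda>_. 0)"
  shows "attn_head_last d dh WK WQ WO V x1 x2 =
    (\<lambda>i. attn_weight d dh WK WQ x1 x2 * matvec d dh WO (matvec dh d V x1) i)"
  using assms by (simp add: attn_head_last_def attn_weight_def softmax2_def Let_def)

section \<open>The shared embedding and its readout\<close>

definition token_embedding :: "nat \<Rightarrow> (nat \<Rightarrow> nat \<Rightarrow> nat) \<Rightarrow> nat + nat \<Rightarrow> nat \<Rightarrow> real" where
  "token_embedding R g t = (case t of
      Inl x \<Rightarrow> (\<lambda>i. if i = 0 then real x else if i = 1 then - 8 * (real x)\<^sup>2
                   else if i \<le> R + 1 then real (g (i - 1) x) else 0)
    | Inr r \<Rightarrow> (\<lambda>i. if i = 1 \<or> i = R + 1 + r then 1 else 0))"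

lemma sum_token_embedding_relation_slots:
  shows "r \<in> {1..R} \<Longrightarrow> (\<Sum>j\<in>{R + 2..2 * R + 1}. token_embedding R g (Inr r) j) = 1"
    and "(\<Sum>j\<in>{R + 2..2 * R + 1}. token_embedding R g (Inl x) j) = 0"
proof -
  assume r: "r \<in> {1..R}"
  have "(\<Sum>j\<in>{R + 2..2 * R + 1}. token_embedding R g (Inr r) j) =
      (\<Sum>j\<in>{R + 2..2 * R + 1}. if j = R + 1 + r then 1 else 0)"
    by (intro sum.cong) (auto simp: token_embedding_def)
  then show "(\<Sum>j\<in>{R + 2..2 * R + 1}. token_embedding R g (Inr r) j) = 1"
    using r by simp
qed (auto simp: token_embedding_def intro: sum.neutral)

lemma inner_token_embedding_subject:
  assumes "R + 2 \<le> d" and "\<And>i. 2 \<le> i \<Longrightarrow> i \<le> R + 1 \<Longrightarrow> out i = 0"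
  shows "inner_d d (token_embedding R g (Inl y)) out = real y * out 0 - 8 * (real y)\<^sup>2 * out 1"
proof -
  have "inner_d d (token_embedding R g (Inl y)) out =
      (\<Sum>i\<in>{0, 1}. token_embedding R g (Inl y) i * out i)"
    unfolding inner_d_def using assms by (intro sum.mono_neutral_right) (auto simp: token_embedding_def)
  then show ?thesis
    by (simp add: token_embedding_def)
qed

lemma inner_token_embedding_relation:
  assumes "2 * R + 2 \<le> d" and "r \<in> {1..R}"
  shows "inner_d d (token_embedding R g (Inr r)) out = out 1 + out (R + 1 + r)"
proof -
  have "inner_d d (token_embedding R g (Inr r)) out =
      (\<Sum>i\<in>{1, R + 1 + r}. token_embedding R g (Inr r) i * out i)"
    unfolding inner_d_def using assms by (intro sum.mono_neutral_right) (auto simp: token_embedding_def)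
  then show ?thesis
    using assms(2) by (simp add: token_embedding_def)
qed

lemma nearest_integer_maximises:
  fixes M :: real and y z :: nat
  assumes M: "\<bar>M - z\<bar> \<le> 1/4" and "y \<noteq> z"
  shows "2 * M * y - (real y)\<^sup>2 < 2 * M * z - (real z)\<^sup>2"
proof -
  define t e where "t = real z - real y" and "e = M - real z"
  have "1 \<le> \<bar>t\<bar>"
    using \<open>y \<noteq> z\<close> by (simp add: t_def)
  then have "\<bar>t\<bar> \<le> t * t"
    using mult_left_mono[of 1 "\<bar>t\<bar>" "\<bar>t\<bar>"] by simp
  moreover have "\<bar>t * e\<bar> \<le> \<bar>t\<bar> * (1/4)"
    unfolding abs_mult using M by (intro mult_left_mono) (auto simp: e_def)
  moreover have "(2 * M * z - (real z)\<^sup>2) - (2 * M * y - (real y)\<^sup>2) = t * t + 2 * (t * e)"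
    by (simp add: t_def e_def power2_eq_square algebra_simps)
  ultimately show ?thesis
    using \<open>1 \<le> \<bar>t\<bar>\<close> abs_ge_minus_self[of "t * e"] by linarith
qed

lemma nearest_integer_value:
  fixes M :: real and z :: nat
  assumes M: "\<bar>M - z\<bar> \<le> 1/4" and "1 \<le> z"
  shows "1/2 \<le> 2 * M * z - (real z)\<^sup>2"
proof -
  have "\<bar>real z * (M - z)\<bar> \<le> real z * (1/4)"
    unfolding abs_mult abs_of_nat using M by (intro mult_left_mono) auto
  moreover have "real z \<le> real z * real z"
    using \<open>1 \<le> z\<close> mult_left_mono[of 1 "real z" "real z"] by simp
  moreover have "2 * M * z - (real z)\<^sup>2 = real z * real z + 2 * (real z * (M - z))"
    by (simp add: power2_eq_square algebra_simps)
  ultimately show ?thesis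
    using \<open>1 \<le> z\<close> abs_ge_minus_self[of "real z * (M - z)"] by linarith
qed

lemma predicts_token_embedding:
  fixes M :: real
  assumes d: "2 * R + 2 \<le> d" and z: "z \<in> {1..N}" and M: "\<bar>M - z\<bar> \<le> 1/4"
    and out0: "out 0 = 16 * M" and out1: "out 1 = 1"
    and attribute_slots: "\<And>i. 2 \<le> i \<Longrightarrow> i \<le> R + 1 \<Longrightarrow> out i = 0"
    and relations: "\<And>r. r \<in> {1..R} \<Longrightarrow> out (R + 1 + r) \<le> 2"
  shows "predicts d (vocab N R) (token_embedding R g) out (Inl z)"
proof -
  have subject: "inner_d d (token_embedding R g (Inl y)) out = 8 * (2 * M * y - (real y)\<^sup>2)" for y
  proof -
    have "inner_d d (token_embedding R g (Inl y)) out = real y * out 0 - 8 * (real y)\<^sup>2 * out 1"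
      using d attribute_slots by (intro inner_token_embedding_subject) auto
    then show ?thesis
      unfolding out0 out1 by (simp add: algebra_simps)
  qed
  have "4 \<le> inner_d d (token_embedding R g (Inl z)) out"
    using subject nearest_integer_value[OF M] z by simp
  moreover have "inner_d d (token_embedding R g (Inr r)) out \<le> 3" if "r \<in> {1..R}" for r
    using inner_token_embedding_relation[OF d that] relations[OF that] out1 by simp
  moreover have
    "inner_d d (token_embedding R g (Inl y)) out < inner_d d (token_embedding R g (Inl z)) out"
    if "y \<noteq> z" for y
    using subject nearest_integer_maximises[OF M that] by simp
  ultimately show ?thesis
    unfolding predicts_def vocab_def by fastforce
qed

section \<open>One layer with a ReLU MLP\<close>

(* The factor 2 undoes the uniform attention weight 1/2; dividing by N keeps the copied entries,
   and with them the relation logits, bounded. *)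
definition attribute_copy :: "nat \<Rightarrow> nat \<Rightarrow> nat \<Rightarrow> nat \<Rightarrow> real" where
  "attribute_copy N R =
     select_rows (\<lambda>i. if i \<in> {R + 2..2 * R + 1} then {i - R} else {}) (\<lambda>_. 2 / real N)"

definition mlp_gate :: "nat \<Rightarrow> nat \<Rightarrow> nat \<Rightarrow> nat \<Rightarrow> real" where
  "mlp_gate N R = select_rows (\<lambda>k. {R + 2 + k}) (\<lambda>_. real N)"

definition mlp_readout :: "nat \<Rightarrow> nat \<Rightarrow> nat \<Rightarrow> real" where
  "mlp_readout R = select_rows (\<lambda>i. if i = 0 then {..<R} else {}) (\<lambda>_. 16)"

lemma mlp_model_residual_stream:
  assumes d: "2 * R + 2 \<le> d" and r: "r \<in> {1..R}"
  shows "vadd (attn_head_last d d (\<lambda>_ _. 0) (\<lambda>_ _. 0) (attribute_copy N R) identity_matrix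
      (token_embedding R g (Inl s)) (token_embedding R g (Inr r))) (token_embedding R g (Inr r))
    = (\<lambda>i. (if i \<in> {R + 2..2 * R + 1} then real (g (i - R - 1) s) / real N else 0)
          + token_embedding R g (Inr r) i)"
proof -
  have copy: "matvec d d (attribute_copy N R) x =
      (\<lambda>i. if i \<in> {R + 2..2 * R + 1} then 2 / real N * x (i - R) else 0)" for x
    unfolding attribute_copy_def by (subst matvec_select_rows) (use d in \<open>auto simp: fun_eq_iff\<close>)
  have "attn_weight d d (\<lambda>_ _. 0) (\<lambda>_ _. 0) x1 x2 = 1/2" for x1 x2
    by (simp add: attn_weight_def softmax2_def matvec_def inner_d_def)
  then show ?thesis
    using d r
    by (subst attn_head_last_zero_value)
      (auto simp: fun_eq_iff vadd_def copy matvec_identity_matrix token_embedding_def)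
qed

lemma mlp_model_output:
  assumes d: "2 * R + 2 \<le> d" and r: "r \<in> {1..R}"
    and attributes: "\<forall>h\<in>{1..R}. g h s \<in> {1..N}"
  shows "tf_mlp_out d R (token_embedding R g) (\<lambda>_ _. 0) (\<lambda>_ _. 0) (attribute_copy N R)
      identity_matrix (mlp_gate N R) (\<lambda>_. - real N) identity_matrix (\<lambda>_. 0) (mlp_readout R) (\<lambda>_. 0) (Inl s) (Inr r)
    = (\<lambda>i. (if i \<in> {R + 2..2 * R + 1} then real (g (i - R - 1) s) / real N else 0)
          + token_embedding R g (Inr r) i + (if i = 0 then 16 * real (g r s) else 0))"
proof -
  define xt where "xt = (\<lambda>i. (if i \<in> {R + 2..2 * R + 1} then real (g (i - R - 1) s) / real N
      else 0) + token_embedding R g (Inr r) i)"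
  define hidden where "hidden k = (if k = r - 1 then real (g r s) else 0)" for k
  have "0 < N"
    using attributes r by force
  have gate: "matvec R d (mlp_gate N R) xt = (\<lambda>k. if k < R then real N * xt (R + 2 + k) else 0)"
    unfolding mlp_gate_def by (subst matvec_select_rows) (use d in auto)
  \<comment> \<open>The bias -N cancels every entry except that of r, to which the one-hot code of r adds N.\<close>
  have layer1: "relu_vec R (vadd (matvec R d (mlp_gate N R) xt) (\<lambda>_. - real N)) = hidden"
  proof
    fix k
    show "relu_vec R (vadd (matvec R d (mlp_gate N R) xt) (\<lambda>_. - real N)) k = hidden k"
      unfolding relu_vec_def vadd_def gate
      using r \<open>0 < N\<close> attributes
      by (auto simp: xt_def hidden_def token_embedding_def field_simps)
  qed
  have layer2: "relu_vec R (vadd (matvec R R identity_matrix hidden) (\<lambda>_. 0)) = hidden"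
    using r by (auto simp: fun_eq_iff relu_vec_def vadd_def matvec_identity_matrix hidden_def)
  have layer3:
    "vadd (matvec d R (mlp_readout R) hidden) (\<lambda>_. 0) = (\<lambda>i. if i = 0 then 16 * real (g r s) else 0)"
    unfolding mlp_readout_def using d r
    by (subst matvec_select_rows) (auto simp: fun_eq_iff vadd_def hidden_def)
  show ?thesis
    unfolding tf_mlp_out_def Let_def mlp_model_residual_stream[OF d r] mlp3_def
    unfolding xt_def[symmetric] layer1 layer2 layer3
    by (simp add: vadd_def xt_def)
qed

lemma mlp_model_predicts:
  assumes d: "2 * R + 2 \<le> d" and r: "r \<in> {1..R}"
    and attributes: "\<forall>h\<in>{1..R}. g h s \<in> {1..N}"
  shows "predicts d (vocab N R) (token_embedding R g)
    (tf_mlp_out d R (token_embedding R g) (\<lambda>_ _. 0) (\<lambda>_ _. 0) (attribute_copy N R)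
      identity_matrix (mlp_gate N R) (\<lambda>_. - real N) identity_matrix (\<lambda>_. 0) (mlp_readout R) (\<lambda>_. 0) (Inl s) (Inr r))
    (Inl (g r s))"
proof -
  have "real (g h s) / real N \<le> 1" if "h \<in> {1..R}" for h
    using attributes that by force
  then show ?thesis
    unfolding mlp_model_output[where g = g and s = s, OF d r attributes] using d r attributes
    by (intro predicts_token_embedding[where M = "real (g r s)"])
      (auto simp: token_embedding_def intro: order_trans[of _ 1 2])
qed

section \<open>One layer with R attention heads\<close>

lemma mult_exp_minus_four_le:
  fixes x :: real
  assumes "0 \<le> x"
  shows "x * exp (- (4 * x)) \<le> 1/4"
proof -
  have "4 * x \<le> exp (4 * x)"
    using exp_ge_add_one_self[of "4 * x"] by linarith
  then show ?thesis
    by (simp add: exp_minus field_simps)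
qed

lemma sum_weights_near_delta:
  fixes w a :: "'i \<Rightarrow> real" and \<epsilon> A :: real
  assumes "finite I" and "r \<in> I"
    and w: "\<And>h. h \<in> I \<Longrightarrow> \<bar>w h - (if h = r then 1 else 0)\<bar> \<le> \<epsilon>"
    and a: "\<And>h. h \<in> I \<Longrightarrow> \<bar>a h\<bar> \<le> A"
  shows "\<bar>(\<Sum>h\<in>I. w h * a h) - a r\<bar> \<le> card I * (\<epsilon> * A)"
proof -
  have "(\<Sum>h\<in>I. w h * a h) - a r = (\<Sum>h\<in>I. w h * a h - (if h = r then a h else 0))"
    using assms(1,2) by (simp add: sum_subtractf)
  also have "\<dots> = (\<Sum>h\<in>I. (w h - (if h = r then 1 else 0)) * a h)"
    by (intro sum.cong) (auto simp: left_diff_distrib)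
  also have "\<bar>\<dots>\<bar> \<le> (\<Sum>h\<in>I. \<bar>w h - (if h = r then 1 else 0)\<bar> * \<bar>a h\<bar>)"
    unfolding abs_mult[symmetric] by (rule sum_abs)
  also have "\<dots> \<le> (\<Sum>h\<in>I. \<epsilon> * A)"
    using w a by (intro sum_mono mult_mono) (auto intro: order_trans[OF abs_ge_zero w])
  finally show ?thesis
    by simp
qed

lemma softmax2_selection:
  fixes lam x :: real
  assumes "0 \<le> lam" and "1 \<le> x"
  shows "\<bar>softmax2 (x * (if r = h then 2 * lam else 0)) lam - (if h = r then 1 else 0)\<bar>
    \<le> exp (- lam)"
proof (cases "r = h")
  case True
  have "lam \<le> x * (2 * lam) - lam"
    using assms mult_right_mono[of 1 x "2 * lam"] by simp
  then have "1 - exp (- lam) \<le> softmax2 (x * (2 * lam)) lam"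
    by (rule softmax2_ge)
  then show ?thesis
    using True softmax2_le_one[of "x * (2 * lam)" lam] by (simp add: abs_le_iff)
next
  case False
  then show ?thesis
    using softmax2_le[of lam lam 0] softmax2_nonneg by auto
qed

definition head_key :: "nat \<Rightarrow> nat \<Rightarrow> nat \<Rightarrow> nat \<Rightarrow> real" where
  "head_key R h = select_rows
     (\<lambda>i. if i = 0 then {h + 1} else if i = 1 then {R + 2..2 * R + 1} else {}) (\<lambda>_. 1)"

definition head_query :: "real \<Rightarrow> nat \<Rightarrow> nat \<Rightarrow> nat \<Rightarrow> nat \<Rightarrow> real" where
  "head_query lam R h = select_rows
     (\<lambda>i. if i = 0 then {R + 1 + h} else if i = 1 then {R + 2..2 * R + 1} else {})
     (\<lambda>i. if i = 0 then 2 * lam else lam)"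

(* head_key also serves as value map: head_output keeps only its first row, so the relation token
   contributes nothing to the value. *)
definition head_output :: "nat \<Rightarrow> nat \<Rightarrow> real" where
  "head_output = select_rows (\<lambda>i. if i = 0 then {0} else {}) (\<lambda>_. 16)"

context
  fixes R d dh h :: nat
  assumes d: "2 * R + 2 \<le> d" and dh: "2 \<le> dh" and h: "h \<in> {1..R}"
begin

lemma head_key_subject:
  "matvec dh d (head_key R h) (token_embedding R g (Inl s)) =
   (\<lambda>i. if i = 0 then real (g h s) else 0)"
  unfolding head_key_def
  by (subst matvec_select_rows)
    (use d dh h in \<open>auto simp: fun_eq_iff token_embedding_def sum_token_embedding_relation_slots\<close>)

lemma head_key_relation:
  "r \<in> {1..R} \<Longrightarrow>
   matvec dh d (head_key R h) (token_embedding R g (Inr r)) = (\<lambda>i. if i = 1 then 1 else 0)"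
  unfolding head_key_def
  by (subst matvec_select_rows)
    (use d dh h in \<open>auto simp: fun_eq_iff token_embedding_def sum_token_embedding_relation_slots\<close>)

lemma head_query_relation:
  "r \<in> {1..R} \<Longrightarrow> matvec dh d (head_query lam R h) (token_embedding R g (Inr r)) =
     (\<lambda>i. if i = 0 then (if r = h then 2 * lam else 0) else if i = 1 then lam else 0)"
  unfolding head_query_def
  by (subst matvec_select_rows)
    (use d dh h in \<open>auto simp: fun_eq_iff token_embedding_def sum_token_embedding_relation_slots\<close>)

lemma head_output_apply:
  "matvec d dh head_output x = (\<lambda>i. if i = 0 then 16 * x 0 else 0)"
  unfolding head_output_def
  by (subst matvec_select_rows) (use d dh in \<open>auto simp: fun_eq_iff\<close>)

lemma head_attn_weight:
  "r \<in> {1..R} \<Longrightarrow>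
   attn_weight d dh (head_key R h) (head_query lam R h)
     (token_embedding R g (Inl s)) (token_embedding R g (Inr r))
   = softmax2 (real (g h s) * (if r = h then 2 * lam else 0)) lam"
  using dh
  by (simp add: attn_weight_def head_key_subject head_key_relation head_query_relation inner_d_two)

lemma head_attention:
  "r \<in> {1..R} \<Longrightarrow>
   attn_head_last d dh (head_key R h) (head_query lam R h) head_output (head_key R h)
     (token_embedding R g (Inl s)) (token_embedding R g (Inr r))
   = (\<lambda>i. if i = 0
         then 16 * (softmax2 (real (g h s) * (if r = h then 2 * lam else 0)) lam * real (g h s))
         else 0)"
  by (subst attn_head_last_zero_value)
    (auto simp: head_output_apply head_key_subject head_key_relation head_attn_weight)

end

lemma mha_model_predicts:
  assumes d: "2 * R + 2 \<le> d" and dh: "2 \<le> dh" and r: "r \<in> {1..R}"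
    and attributes: "\<forall>h\<in>{1..R}. g h s \<in> {1..N}"
  defines "lam \<equiv> 4 * real R * real N"
  shows "predicts d (vocab N R) (token_embedding R g)
    (tf_mha_out d dh R (token_embedding R g) (head_key R) (head_query lam R) (\<lambda>_. head_output)
      (head_key R) (Inl s) (Inr r))
    (Inl (g r s))"
proof -
  define w where "w h = softmax2 (real (g h s) * (if r = h then 2 * lam else 0)) lam" for h
  define M where "M = (\<Sum>h\<in>{1..R}. w h * real (g h s))"
  have heads: "(\<Sum>h\<in>{1..R}. attn_head_last d dh (head_key R h) (head_query lam R h) head_output
      (head_key R h) (token_embedding R g (Inl s)) (token_embedding R g (Inr r)) i)
    = (if i = 0 then 16 * M else 0)" for i
    using head_attention[OF d dh _ r] by (simp add: M_def w_def sum_distrib_left)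
  then have out: "tf_mha_out d dh R (token_embedding R g) (head_key R) (head_query lam R)
      (\<lambda>_. head_output) (head_key R) (Inl s) (Inr r)
    = (\<lambda>i. (if i = 0 then 16 * M else 0) + token_embedding R g (Inr r) i)"
    by (simp add: tf_mha_out_def vadd_def)
  have "\<bar>M - real (g r s)\<bar> \<le> real (card {1..R}) * (exp (- lam) * real N)"
    unfolding M_def w_def using r attributes
    by (intro sum_weights_near_delta softmax2_selection) (auto simp: lam_def)
  also have "\<dots> \<le> 1/4"
    using mult_exp_minus_four_le[of "real R * real N"] by (simp add: lam_def algebra_simps)
  finally show ?thesis
    using d r attributes
    unfolding out by (intro predicts_token_embedding) (auto simp: token_embedding_def)
qed

lemma four_ln_gt_two:
  assumes "2 \<le> N"
  shows "2 < 4 * ln (real N)"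
proof -
  have "ln 2 \<le> ln (real N)"
    using assms by simp
  then show ?thesis
    using ln2_ge_two_thirds by linarith
qed

lemma mlp_dimension:
  assumes "2 \<le> N" and "1 \<le> R"
  shows "2 * R + 2 \<le> nat \<lceil>4 * real R * ln (real N)\<rceil> + 1"
proof -
  have "real (2 * R) < 4 * real R * ln (real N)"
    using four_ln_gt_two[OF assms(1)] assms(2) by simp
  then show ?thesis
    by linarith
qed

lemma head_dimension:
  assumes "2 \<le> N"
  shows "3 \<le> nat \<lceil>4 * ln (real N)\<rceil>"
  using four_ln_gt_two[OF assms] by linarith

lemma mha_dimension:
  assumes "2 \<le> N" and "1 \<le> R"
  shows "2 * R + 2 \<le> R * nat \<lceil>4 * ln (real N)\<rceil> + nat \<lceil>4 * ln (real R)\<rceil> + 1"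
  using mult_le_mono2[OF head_dimension[OF assms(1)], of R] assms(2) by linarith

theorem theorem1:
  fixes N R :: nat and g :: "nat \<Rightarrow> nat \<Rightarrow> nat"
  assumes N2: "N \<ge> 2"
    and bij: "\<forall>r\<in>{1..R}. bij_betw (g r) {1..N} {1..N}"
  shows
    "(let d = nat \<lceil>4 * real R * ln (real N)\<rceil> + 1 in
       \<exists>E WK WQ WO V W1 b1 W2 b2 W3 b3.
         \<forall>s\<in>{1..N}. \<forall>r\<in>{1..R}.
           predicts d (vocab N R) E
             (tf_mlp_out d R E WK WQ WO V W1 b1 W2 b2 W3 b3 (Inl s) (Inr r)) (Inl (g r s)))
     \<and>
     (let dh = nat \<lceil>4 * ln (real N)\<rceil>;
          d = R * dh + nat \<lceil>4 * ln (real R)\<rceil> + 1 in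
       \<exists>E WK WQ WO V.
         \<forall>s\<in>{1..N}. \<forall>r\<in>{1..R}.
           predicts d (vocab N R) E
             (tf_mha_out d dh R E WK WQ WO V (Inl s) (Inr r)) (Inl (g r s)))"
proof -
  have attributes: "\<forall>h\<in>{1..R}. g h s \<in> {1..N}" if "s \<in> {1..N}" for s
    using bij that by (blast intro: bij_betw_apply)
  have head_dim: "2 \<le> nat \<lceil>4 * ln (real N)\<rceil>"
    using head_dimension[OF N2] by linarith
  have "predicts (nat \<lceil>4 * real R * ln (real N)\<rceil> + 1) (vocab N R) (token_embedding R g)
      (tf_mlp_out (nat \<lceil>4 * real R * ln (real N)\<rceil> + 1) R (token_embedding R g) (\<lambda>_ _. 0) (\<lambda>_ _. 0)
        (attribute_copy N R) identity_matrix (mlp_gate N R) (\<lambda>_. - real N) identity_matrix (\<lambda>_. 0)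
        (mlp_readout R) (\<lambda>_. 0) (Inl s) (Inr r)) (Inl (g r s))"
    if "s \<in> {1..N}" and "r \<in> {1..R}" for s r
    using that N2 by (intro mlp_model_predicts mlp_dimension attributes) auto
  moreover have "predicts (R * nat \<lceil>4 * ln (real N)\<rceil> + nat \<lceil>4 * ln (real R)\<rceil> + 1) (vocab N R)
      (token_embedding R g)
      (tf_mha_out (R * nat \<lceil>4 * ln (real N)\<rceil> + nat \<lceil>4 * ln (real R)\<rceil> + 1) (nat \<lceil>4 * ln (real N)\<rceil>) R
        (token_embedding R g) (head_key R) (head_query (4 * real R * real N) R) (\<lambda>_. head_output)
        (head_key R) (Inl s) (Inr r)) (Inl (g r s))"
    if "s \<in> {1..N}" and "r \<in> {1..R}" for s r
    using that N2 by (intro mha_model_predicts mha_dimension head_dim attributes) auto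
  ultimately show ?thesis
    unfolding Let_def by blast
qed

end
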